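(* Let $(\mathcal{H},|\cdot|)$ be a separable Hilbert space and let $f=(f_j)_{j=0}^{\infty}$ be an $\mathcal{H}$-valued martingale relative to a filtration $(\mathscr{F}_j)_{j=0}^{\infty}$ on a probability space $(\Omega,\mathscr{F},\mathbb{P})$. Suppose there is a nonnegative predictable sequence $w=(w_j)_{j=1}^{\infty}$ (i.e. $w_j$ is $\mathscr{F}_{j-1}$-measurable) such that $|f_j-f_{j-1}|\le w_j$ almost surely for every $j\in\mathbb{N}$. Then for every $b\ge \big\|\sum_{j=1}^{\infty}w_j^2\big\|_{\infty}$ and every $r>0$, $$\mathbb{P}\{f^*\ge r\}\le 2\exp\Big\{-\frac{r^2}{2b}\Big\},$$ where $f^*=\sup_{j\in\mathbb{N}}|f_j-f_0|$.
   Context: $\|\cdot\|_\infty$ denotes the $L^\infty(\mathbb{P})$-norm (essential supremum). Martingales are sequences of Bochner-integrable random variables adapted to the filtration with $\mathbb{E}(f_j\mid\mathscr{F}_s)=f_s$ for $s\le j$. Standing convention: $\mathscr{F}_0$ is the trivial $\sigma$-algebra. *)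

theory Defs
  imports "HOL-Probability.Probability"
begin

definition nat_filtration :: "'a measure \<Rightarrow> (nat \<Rightarrow> 'a measure) \<Rightarrow> bool" where
  "nat_filtration M F \<longleftrightarrow> (\<forall>j. subalgebra M (F j)) \<and> filtration (space M) F"

text \<open>Martingale with values in a Banach space: adapted, Bochner integrable, and
  E(f_j | F_s) = f_s for s \<le> j, written out via the defining property of
  conditional expectation (equal set integrals over every A in F_s).\<close>
definition bmartingale :: "'a measure \<Rightarrow> (nat \<Rightarrow> 'a measure) \<Rightarrow>
    (nat \<Rightarrow> 'a \<Rightarrow> 'h::{banach, second_countable_topology}) \<Rightarrow> bool" where
  "bmartingale M F f \<longleftrightarrow>
     (\<forall>j. f j \<in> borel_measurable (F j) \<and> integrable M (f j)) \<and>
     (\<forall>s j A. s \<le> j \<longrightarrow> A \<in> sets (F s) \<longrightarrow>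
        (LINT x:A|M. f j x) = (LINT x:A|M. f s x))"

end

theory Submission
  imports Defs
begin

text \<open>
  For vectors x, d of a real inner product space with norm d \<le> w, the vector
  x + d has squared norm at most z = |x|^2 + w^2 + 2 (x \<bullet> d), which is a convex combination of
  (|x| - w)^2 and (|x| + w)^2 with weights affine in x \<bullet> d. Convexity of z \<mapsto> cosh (l sqrt z) on
  [0, \<infinity>) therefore gives
    cosh (l |x + d|) \<le> cosh (l |x|) cosh (l w) + \<kappa> (x \<bullet> d),
  where \<kappa> depends only on |x| and w. If d = f (k + 1) - f k is a martingale increment and w is
  predictable, the last term integrates to 0 against every event of F k, so
    G k = cosh (l |f k - f 0|) / (cosh (l w 1) * ... * cosh (l w k))
  is a nonnegative supermartingale with G 0 = 1. Doob's maximal inequality bounds the probability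
  that some G k exceeds c by 1 / c. Since cosh t \<ge> exp t / 2 and cosh t \<le> exp (t^2 / 2), the
  denominator is at most exp (l^2 b / 2), so the probability that some |f k - f 0| exceeds s is at
  most 2 exp (l^2 b / 2 - l s); the choice l = s / b gives 2 exp (- s^2 / (2 b)).
\<close>

section \<open>Pinelis' inequality for cosh of a norm\<close>

lemma sinh_le_mult_cosh:
  fixes u :: real
  assumes "0 \<le> u"
  shows "sinh u \<le> u * cosh u"
proof -
  have "(\<lambda>t. t * cosh t - sinh t) 0 \<le> (\<lambda>t. t * cosh t - sinh t) u"
  proof (rule DERIV_nonneg_imp_nondecreasing[OF assms])
    fix t :: real assume "0 \<le> t"
    then show "\<exists>y. ((\<lambda>t. t * cosh t - sinh t) has_real_derivative y) (at t) \<and> 0 \<le> y"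
      by (intro exI[of _ "t * sinh t"]) (auto intro!: derivative_eq_intros)
  qed
  then show ?thesis by simp
qed

lemma abs_sinh_le_mult_cosh:
  fixes l u :: real
  assumes "0 \<le> l"
  shows "\<bar>sinh (l * u)\<bar> \<le> l * \<bar>u\<bar> * cosh (l * u)"
proof -
  have "l * \<bar>u\<bar> = \<bar>l * u\<bar>" using assms by (simp add: abs_mult)
  then show ?thesis using sinh_le_mult_cosh[of "\<bar>l * u\<bar>"] by simp
qed

lemma cosh_mult_abs: "cosh (l * \<bar>u\<bar>) = cosh (l * u :: real)"
  by (metis abs_abs abs_mult cosh_real_abs)

lemma cosh_mult_mono:
  fixes l u v :: real
  assumes "0 \<le> u" "u \<le> v"
  shows "cosh (l * u) \<le> cosh (l * v)"
proof -
  have "\<bar>l * u\<bar> \<le> \<bar>l * v\<bar>" using assms by (simp add: abs_mult mult_left_mono)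
  then show ?thesis by (metis abs_ge_zero cosh_real_abs cosh_real_nonneg_le_iff)
qed

lemma cosh_le_exp_square_half:
  fixes u :: real
  shows "cosh u \<le> exp (u\<^sup>2 / 2)"
proof -
  have "ln (cosh v) \<le> v\<^sup>2 / 2" if "0 \<le> v" for v :: real
  proof -
    have "(\<lambda>t. t\<^sup>2 / 2 - ln (cosh t)) 0 \<le> (\<lambda>t. t\<^sup>2 / 2 - ln (cosh t)) v"
    proof (rule DERIV_nonneg_imp_nondecreasing[OF that])
      fix t :: real assume "0 \<le> t"
      then have "0 \<le> t - sinh t / cosh t"
        using sinh_le_mult_cosh[of t] by (simp add: field_simps)
      then show "\<exists>y. ((\<lambda>t. t\<^sup>2 / 2 - ln (cosh t)) has_real_derivative y) (at t) \<and> 0 \<le> y"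
        by (intro exI[of _ "t - sinh t / cosh t"]) (auto intro!: derivative_eq_intros)
    qed
    then show ?thesis by simp
  qed
  from this[of "\<bar>u\<bar>"] have "ln (cosh u) \<le> u\<^sup>2 / 2" by simp
  then show ?thesis by (metis cosh_real_pos exp_le_cancel_iff exp_ln)
qed

lemma sinh_div_self_mono:
  fixes x y :: real
  assumes "0 < x" "x \<le> y"
  shows "sinh x / x \<le> sinh y / y"
proof (rule DERIV_nonneg_imp_nondecreasing[OF assms(2)])
  fix t assume "x \<le> t"
  then have t: "0 < t" using assms(1) by simp
  then have "0 \<le> (cosh t * t - sinh t) / t\<^sup>2"
    using sinh_le_mult_cosh[of t] by (simp add: algebra_simps)
  moreover have "((\<lambda>t. sinh t / t) has_real_derivative (cosh t * t - sinh t) / t\<^sup>2) (at t)"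
    using t by (auto intro!: derivative_eq_intros simp: power2_eq_square)
  ultimately show "\<exists>y. ((\<lambda>t. sinh t / t) has_real_derivative y) (at t) \<and> 0 \<le> y" by blast
qed

lemma convex_on_atLeastI:
  fixes f :: "real \<Rightarrow> real"
  assumes cont: "continuous_on {a..} f" and convex: "convex_on {a<..} f"
  shows "convex_on {a..} f"
proof (rule convex_on_linorderI)
  fix t x y :: real assume t: "0 < t" "t < 1" and xy: "x \<in> {a..}" "y \<in> {a..}" "x < y"
  have ev: "\<forall>\<^sub>F x' in at_right x. f ((1 - t) * x' + t * y) \<le> (1 - t) * f x' + t * f y"
    using eventually_at_right_less[of x]
  proof (rule eventually_mono)
    fix x' assume "x < x'"
    then show "f ((1 - t) * x' + t * y) \<le> (1 - t) * f x' + t * f y"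
      using convex_onD[OF convex, of t x' y] t xy by auto
  qed
  have lim: "((\<lambda>x'. f (g x')) \<longlongrightarrow> f (g x)) (at_right x)"
    if "continuous_on UNIV g" "\<And>x'. x \<le> x' \<Longrightarrow> g x' \<in> {a..}" for g
  proof (rule continuous_on_tendsto_compose[OF cont])
    show "(g \<longlongrightarrow> g x) (at_right x)"
      using that(1)
      by (intro filterlim_at_split[THEN iffD1, THEN conjunct2]) (simp add: continuous_on_def)
    show "\<forall>\<^sub>F x' in at_right x. g x' \<in> {a..}"
      using eventually_at_right_less[of x] by eventually_elim (use that(2) in auto)
  qed (use that(2) in auto)
  have "((\<lambda>x'. f ((1 - t) * x' + t * y)) \<longlongrightarrow> f ((1 - t) * x + t * y)) (at_right x)"
  proof (intro lim)
    fix x' assume "x \<le> x'"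
    then have "(1 - t) * a \<le> (1 - t) * x'" "t * a \<le> t * y"
      using t xy by (auto intro!: mult_left_mono)
    then show "(1 - t) * x' + t * y \<in> {a..}" by (simp add: algebra_simps)
  qed (auto intro!: continuous_intros)
  moreover have "((\<lambda>x'. (1 - t) * f x' + t * f y) \<longlongrightarrow> (1 - t) * f x + t * f y) (at_right x)"
    using xy by (intro tendsto_intros lim[of id, simplified]) auto
  ultimately show "f ((1 - t) *\<^sub>R x + t *\<^sub>R y) \<le> (1 - t) * f x + t * f y"
    using tendsto_le[OF trivial_limit_at_right_real _ _ ev] by simp
qed simp

lemma convex_on_cosh_sqrt: "convex_on {0..} (\<lambda>z. cosh (l * sqrt z))"
proof -
  have "convex_on {0..} (\<lambda>z. cosh (k * sqrt z))" if k: "0 < k" for k :: real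
  proof (rule convex_on_atLeastI)
    show "continuous_on {0..} (\<lambda>z. cosh (k * sqrt z))" by (intro continuous_intros)
    let ?f' = "\<lambda>z. k\<^sup>2 / 2 * (sinh (k * sqrt z) / (k * sqrt z))"
    show "convex_on {0<..} (\<lambda>z. cosh (k * sqrt z))"
    proof (rule convex_on_realI[where f' = ?f'])
      fix z :: real assume "z \<in> {0<..}"
      then show "((\<lambda>z. cosh (k * sqrt z)) has_real_derivative ?f' z) (at z)"
        using k by (auto intro!: derivative_eq_intros simp: power2_eq_square field_simps)
    next
      fix y z :: real assume "y \<in> {0<..}" "z \<in> {0<..}" "y \<le> z"
      then show "?f' y \<le> ?f' z"
        using k by (intro mult_left_mono sinh_div_self_mono) auto
    qed simp
  qed
  moreover have "(\<lambda>z. cosh (l * sqrt z)) = (\<lambda>z. cosh (\<bar>l\<bar> * sqrt z))"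
    by (metis abs_abs abs_mult cosh_real_abs)
  ultimately show ?thesis
    by (cases "l = 0") (simp_all add: convex_on_const)
qed

lemma cosh_norm_add_le:
  fixes x d :: "'a::real_inner" and l w :: real
  assumes "norm d \<le> w"
  shows "cosh (l * norm (x + d))
    \<le> cosh (l * norm x) * cosh (l * w) + sinh (l * norm x) * sinh (l * w) / (norm x * w) * (x \<bullet> d)"
proof -
  define a p where "a = norm x" and "p = x \<bullet> d"
  consider "w = 0" | "a = 0" | "0 < a" "0 < w"
    using assms norm_ge_zero[of d] a_def by fastforce
  then show ?thesis
  proof cases
    case 1
    then show ?thesis using assms by simp
  next
    case 2
    then show ?thesis using assms by (simp add: a_def cosh_mult_mono)
  next
    case 3
    have p: "\<bar>p\<bar> \<le> a * w"
      using Cauchy_Schwarz_ineq2[of x d] assms 3 unfolding a_def p_def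
      by (meson mult_left_mono norm_ge_zero order_trans)
    define z where "z = a\<^sup>2 + w\<^sup>2 + 2 * p"
    define \<theta> where "\<theta> = (1 + p / (a * w)) / 2"
    have \<theta>: "0 \<le> \<theta>" "\<theta> \<le> 1"
      using p 3 unfolding \<theta>_def by (auto simp: field_simps abs_le_iff)
    have z: "z = (1 - \<theta>) * (a - w)\<^sup>2 + \<theta> * (a + w)\<^sup>2"
      using 3 unfolding z_def \<theta>_def by (simp add: field_simps power2_eq_square)
    have "(norm (x + d))\<^sup>2 = a\<^sup>2 + 2 * p + (norm d)\<^sup>2"
      unfolding a_def p_def power2_norm_eq_inner by (simp add: inner_add inner_commute)
    also have "\<dots> \<le> z" unfolding z_def using assms by (auto intro!: power_mono)
    finally have "cosh (l * norm (x + d)) \<le> cosh (l * sqrt z)"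
      by (intro cosh_mult_mono) (auto simp: real_le_rsqrt)
    also have "\<dots> \<le> (1 - \<theta>) * cosh (l * sqrt ((a - w)\<^sup>2)) + \<theta> * cosh (l * sqrt ((a + w)\<^sup>2))"
      using convex_onD[OF convex_on_cosh_sqrt, of \<theta> "(a - w)\<^sup>2" "(a + w)\<^sup>2"] \<theta> z by simp
    also have "\<dots> = (1 - \<theta>) * cosh (l * a - l * w) + \<theta> * cosh (l * a + l * w)"
      using 3 by (simp add: cosh_mult_abs algebra_simps)
    also have "\<dots> = cosh (l * a) * cosh (l * w) + sinh (l * a) * sinh (l * w) / (a * w) * p"
      using 3 unfolding cosh_add cosh_diff \<theta>_def by (simp add: field_simps)
    finally show ?thesis unfolding a_def p_def .
  qed
qed

section \<open>Bounded integrands against martingale increments\<close>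

lemma borel_measurable_cosh[measurable]: "(cosh :: real \<Rightarrow> real) \<in> borel_measurable borel"
  by (intro borel_measurable_continuous_onI continuous_intros)

lemma borel_measurable_sinh[measurable]: "(sinh :: real \<Rightarrow> real) \<in> borel_measurable borel"
  by (intro borel_measurable_continuous_onI continuous_intros)

lemma integral_inner_simple_function_eq_0:
  fixes S D :: "'a \<Rightarrow> 'h::{real_inner, banach, second_countable_topology}"
  assumes sub: "subalgebra M N" and S: "simple_function N S" and D: "integrable M D"
    and orth: "\<And>B. B \<in> sets N \<Longrightarrow> (LINT x:B|M. D x) = 0"
  shows "(\<integral>x. S x \<bullet> D x \<partial>M) = 0"
proof -
  let ?B = "\<lambda>y. S -` {y} \<inter> space N"
  have space: "space N = space M" and sets: "sets N \<subseteq> sets M"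
    using sub unfolding subalgebra_def by auto
  have B: "?B y \<in> sets M" for y
    using simple_functionD(2)[OF S] sets by blast
  have int: "integrable M (\<lambda>x. indicator (?B y) x *\<^sub>R D x)" for y
    using integrable_mult_indicator[OF B D] .
  have "(\<integral>x. S x \<bullet> D x \<partial>M)
      = (\<integral>x. (\<Sum>y\<in>S ` space N. y \<bullet> (indicator (?B y) x *\<^sub>R D x)) \<partial>M)"
  proof (rule Bochner_Integration.integral_cong[OF refl])
    fix x assume "x \<in> space M"
    then have "S x = (\<Sum>y\<in>S ` space N. indicator (?B y) x *\<^sub>R y)"
      unfolding space[symmetric] by (rule simple_function_indicator_representation_banach[OF S])
    then show "S x \<bullet> D x = (\<Sum>y\<in>S ` space N. y \<bullet> (indicator (?B y) x *\<^sub>R D x))"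
      by (simp only: inner_sum_left inner_scaleR_left inner_scaleR_right)
  qed
  also have "\<dots> = (\<Sum>y\<in>S ` space N. (\<integral>x. y \<bullet> (indicator (?B y) x *\<^sub>R D x) \<partial>M))"
    by (rule Bochner_Integration.integral_sum) (rule integrable_inner_right[OF int])
  also have "\<dots> = (\<Sum>y\<in>S ` space N. y \<bullet> (LINT x:?B y|M. D x))"
    by (simp only: set_lebesgue_integral_def integral_inner_right[OF int])
  also have "\<dots> = 0"
    using orth simple_functionD(2)[OF S] by simp
  finally show ?thesis .
qed

lemma integrable_inner_bounded:
  fixes V D :: "'a \<Rightarrow> 'h::{real_inner, banach, second_countable_topology}"
  assumes V: "V \<in> borel_measurable M" and bounded: "AE x in M. norm (V x) \<le> C"
    and D: "integrable M D"
  shows "integrable M (\<lambda>x. V x \<bullet> D x)"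
proof (rule Bochner_Integration.integrable_bound[where f="\<lambda>x. C * norm (D x)"])
  show "AE x in M. norm (V x \<bullet> D x) \<le> norm (C * norm (D x))"
    using bounded
  proof eventually_elim
    case (elim x)
    have "norm (V x \<bullet> D x) \<le> norm (V x) * norm (D x)" by (simp add: Cauchy_Schwarz_ineq2)
    also have "\<dots> \<le> C * norm (D x)" using elim by (simp add: mult_right_mono)
    finally show ?case by simp
  qed
qed (use V D in auto)

lemma integral_inner_bounded_eq_0:
  fixes V D :: "'a \<Rightarrow> 'h::{real_inner, banach, second_countable_topology}"
  assumes sub: "subalgebra M N" and V: "V \<in> borel_measurable N"
    and bounded: "AE x in M. norm (V x) \<le> C" and D: "integrable M D"
    and orth: "\<And>B. B \<in> sets N \<Longrightarrow> (LINT x:B|M. D x) = 0"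
  shows "(\<integral>x. V x \<bullet> D x \<partial>M) = 0"
proof -
  have space: "space N = space M" using sub unfolding subalgebra_def by simp
  obtain S where S: "\<And>i. simple_function N (S i)"
    and lim: "\<And>x. x \<in> space N \<Longrightarrow> (\<lambda>i. S i x) \<longlonglongrightarrow> V x"
    and le: "\<And>i x. x \<in> space N \<Longrightarrow> dist (S i x) 0 \<le> 2 * dist (V x) 0"
    using borel_measurable_implies_sequence_metric[OF V, of 0] by blast
  have [measurable]: "V \<in> borel_measurable M" "D \<in> borel_measurable M"
    using measurable_from_subalg[OF sub V] D by auto
  have [measurable]: "S i \<in> borel_measurable M" for i
    using measurable_from_subalg[OF sub borel_measurable_simple_function[OF S]] .
  have "(\<lambda>i. \<integral>x. S i x \<bullet> D x \<partial>M) \<longlonglongrightarrow> (\<integral>x. V x \<bullet> D x \<partial>M)"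
  proof (rule integral_dominated_convergence[where w="\<lambda>x. 2 * C * norm (D x)"])
    show "AE x in M. (\<lambda>i. S i x \<bullet> D x) \<longlonglongrightarrow> V x \<bullet> D x"
      using lim space by (auto intro!: tendsto_inner)
    show "AE x in M. norm (S i x \<bullet> D x) \<le> 2 * C * norm (D x)" for i
      using bounded AE_space
    proof eventually_elim
      case (elim x)
      have "norm (S i x \<bullet> D x) \<le> norm (S i x) * norm (D x)"
        using Cauchy_Schwarz_ineq2 by simp
      also have "\<dots> \<le> 2 * C * norm (D x)"
        using le[of x i] elim space by (auto intro!: mult_right_mono)
      finally show ?case .
    qed
  qed (use D in auto)
  moreover have "(\<integral>x. S i x \<bullet> D x \<partial>M) = 0" for i
    using integral_inner_simple_function_eq_0[OF sub S D orth] .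
  ultimately show ?thesis by (simp add: LIMSEQ_const_iff)
qed

section \<open>Doob's maximal inequality\<close>

lemma measurable_nat_filtration_mono:
  assumes "nat_filtration M F" "i \<le> j" "g \<in> measurable (F i) N"
  shows "g \<in> measurable (F j) N"
proof -
  have "subalgebra (F j) (F i)"
    using assms(1,2) filtration.sets_F_mono filtration.space_F
    unfolding nat_filtration_def subalgebra_def by metis
  then show ?thesis using measurable_from_subalg assms(3) by blast
qed

lemma (in finite_measure) set_integral_ge_measure:
  fixes g :: "'a \<Rightarrow> real"
  assumes A: "A \<in> sets M" and g: "integrable M g" and ge: "\<And>x. x \<in> A \<Longrightarrow> c \<le> g x"
  shows "c * measure M A \<le> (LINT x:A|M. g x)"
proof -
  have "c * measure M A = (LINT x:A|M. c)"
    using set_integral_const[OF A, of c] by (simp add: emeasure_eq_measure mult.commute)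
  also have "\<dots> \<le> (LINT x:A|M. g x)"
    using A ge integrable_mult_indicator[OF A g]
    by (intro set_integral_mono) (auto simp: set_integrable_def emeasure_eq_measure)
  finally show ?thesis .
qed

definition stays_below :: "'a measure \<Rightarrow> (nat \<Rightarrow> 'a \<Rightarrow> real) \<Rightarrow> real \<Rightarrow> nat \<Rightarrow> 'a set" where
  "stays_below M G c n = {x\<in>space M. \<forall>i<n. G i x < c}"

lemma stays_below_Suc: "stays_below M G c (Suc n) = {x\<in>stays_below M G c n. G n x < c}"
  by (auto simp: stays_below_def less_Suc_eq)

lemma stays_below_Suc_in_sets:
  assumes F: "nat_filtration M F" and adapted: "\<And>k. G k \<in> borel_measurable (F k)"
  shows "stays_below M G c (Suc n) \<in> sets (F n)"
proof -
  have space_F: "space (F n) = space M"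
    using F unfolding nat_filtration_def subalgebra_def by auto
  have "stays_below M G c (Suc n) = (\<Inter>i\<in>{..<Suc n}. {x\<in>space (F n). G i x < c})"
    unfolding stays_below_def space_F by auto
  also have "\<dots> \<in> sets (F n)"
  proof (intro sets.finite_INT)
    fix i assume "i \<in> {..<Suc n}"
    then have [measurable]: "G i \<in> borel_measurable (F n)"
      using measurable_nat_filtration_mono[OF F _ adapted] by simp
    show "{x\<in>space (F n). G i x < c} \<in> sets (F n)" by measurable
  qed auto
  finally show ?thesis .
qed

lemma stays_below_in_sets:
  assumes F: "nat_filtration M F" and adapted: "\<And>k. G k \<in> borel_measurable (F k)"
  shows "stays_below M G c n \<in> sets M"
proof (cases n)
  case 0
  then show ?thesis by (simp add: stays_below_def)
next
  case (Suc m)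
  then show ?thesis
    using stays_below_Suc_in_sets[OF assms, of c m] F
    unfolding nat_filtration_def subalgebra_def by blast
qed

lemma supermartingale_stays_below_ineq:
  fixes G :: "nat \<Rightarrow> 'a \<Rightarrow> real"
  assumes "finite_measure M" and F: "nat_filtration M F"
    and adapted: "\<And>k. G k \<in> borel_measurable (F k)"
    and integrable: "\<And>k. integrable M (G k)"
    and supermartingale: "\<And>m A. A \<in> sets (F m) \<Longrightarrow> (LINT x:A|M. G (Suc m) x) \<le> (LINT x:A|M. G m x)"
  shows "c * measure M (space M - stays_below M G c n) + (LINT x:stays_below M G c n|M. G n x)
    \<le> (\<integral>x. G 0 x \<partial>M)"
proof (induction n)
  case 0
  show ?case using set_integral_space[OF integrable] by (simp add: stays_below_def)
next
  case (Suc n)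
  interpret finite_measure M by fact
  let ?B = "stays_below M G c" let ?D = "?B n - ?B (Suc n)"
  have B_M: "?B m \<in> sets M" for m
    using stays_below_in_sets[OF F adapted] .
  have D: "?D \<in> sets M" using B_M by blast
  have B_Suc: "?B (Suc n) \<subseteq> ?B n" and hit: "\<And>x. x \<in> ?D \<Longrightarrow> c \<le> G n x"
    by (auto simp: stays_below_Suc)
  have set_integrable: "set_integrable M A (G k)" if "A \<in> sets M" for A k
    unfolding set_integrable_def using integrable_mult_indicator[OF that integrable] .
  have "c * measure M ?D + (LINT x:?B (Suc n)|M. G (Suc n) x)
      \<le> (LINT x:?D|M. G n x) + (LINT x:?B (Suc n)|M. G n x)"
    using set_integral_ge_measure[OF D integrable hit]
      supermartingale[OF stays_below_Suc_in_sets[OF F adapted]]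
    by (rule add_mono)
  also have "\<dots> = (LINT x:?B n|M. G n x)"
    using set_integral_Un[OF _ set_integrable set_integrable, of ?D "?B (Suc n)" n] D B_M B_Suc
    by (simp add: Un_absorb2 Int_commute)
  finally have "c * measure M ?D + (LINT x:?B (Suc n)|M. G (Suc n) x) \<le> (LINT x:?B n|M. G n x)" .
  moreover have "space M - ?B (Suc n) = (space M - ?B n) \<union> ?D" "(space M - ?B n) \<inter> ?D = {}"
    using B_Suc sets.sets_into_space[OF B_M] by blast+
  then have "measure M (space M - ?B (Suc n)) = measure M (space M - ?B n) + measure M ?D"
    using finite_measure_Union[of "space M - ?B n" ?D] D B_M by simp
  ultimately show ?case using Suc.IH by (simp add: distrib_left)
qed

lemma supermartingale_maximal_ineq:
  fixes G :: "nat \<Rightarrow> 'a \<Rightarrow> real"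
  assumes "finite_measure M" and F: "nat_filtration M F"
    and adapted: "\<And>k. G k \<in> borel_measurable (F k)"
    and integrable: "\<And>k. integrable M (G k)"
    and nonneg: "\<And>k x. x \<in> space M \<Longrightarrow> 0 \<le> G k x"
    and supermartingale: "\<And>m A. A \<in> sets (F m) \<Longrightarrow> (LINT x:A|M. G (Suc m) x) \<le> (LINT x:A|M. G m x)"
  shows "c * measure M {x\<in>space M. \<exists>k. c \<le> G k x} \<le> (\<integral>x. G 0 x \<partial>M)"
proof -
  interpret finite_measure M by fact
  define E where "E n = space M - stays_below M G c n" for n
  have [measurable]: "G k \<in> borel_measurable M" for k
    using integrable by auto
  have "E n \<in> sets M" for n
    unfolding E_def stays_below_def by measurable
  moreover have "incseq E"
    unfolding incseq_def E_def stays_below_def by auto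
  ultimately have "(\<lambda>n. c * measure M (E n)) \<longlonglongrightarrow> c * measure M (\<Union>n. E n)"
    by (intro tendsto_mult_left finite_Lim_measure_incseq) auto
  moreover have "(\<Union>n. E n) = {x\<in>space M. \<exists>k. c \<le> G k x}"
  proof (intro equalityI subsetI)
    fix x assume "x \<in> {x\<in>space M. \<exists>k. c \<le> G k x}"
    then obtain k where "x \<in> space M" "c \<le> G k x" by blast
    then have "x \<in> E (Suc k)"
      unfolding E_def stays_below_def using lessI[of k] by (auto simp: not_less)
    then show "x \<in> (\<Union>n. E n)" by blast
  qed (auto simp: E_def stays_below_def not_less)
  moreover have "c * measure M (E n) \<le> (\<integral>x. G 0 x \<partial>M)" for n
  proof -
    have "0 \<le> (LINT x:stays_below M G c n|M. G n x)"
      unfolding set_lebesgue_integral_def using nonneg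
      by (intro integral_nonneg_AE AE_I2) (auto simp: indicator_def)
    moreover have "c * measure M (E n) + (LINT x:stays_below M G c n|M. G n x)
        \<le> (\<integral>x. G 0 x \<partial>M)"
      unfolding E_def by (rule supermartingale_stays_below_ineq[OF assms(1-4)]) (rule supermartingale)
    ultimately show ?thesis by linarith
  qed
  ultimately show ?thesis
    by (intro LIMSEQ_le_const2) auto
qed

section \<open>The cosh supermartingale\<close>

locale bounded_increment_martingale = prob_space M for M :: "'a measure" +
  fixes F :: "nat \<Rightarrow> 'a measure"
    and f :: "nat \<Rightarrow> 'a \<Rightarrow> 'h::{real_inner, banach, second_countable_topology}"
    and w :: "nat \<Rightarrow> 'a \<Rightarrow> real" and b :: real
  assumes filtration: "nat_filtration M F"
    and martingale: "bmartingale M F f"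
    and predictable: "\<And>j. w (Suc j) \<in> borel_measurable (F j)"
    and increment_le: "\<And>j. AE x in M. norm (f (Suc j) x - f j x) \<le> w (Suc j) x"
    and square_sum_le: "AE x in M. \<forall>n. (\<Sum>j<n. (w (Suc j) x)\<^sup>2) \<le> b"
begin

lemma subalgebra_F: "subalgebra M (F j)"
  using filtration by (simp add: nat_filtration_def)

lemma sets_F_subset: "sets (F j) \<subseteq> sets M"
  using subalgebra_F unfolding subalgebra_def by simp

lemma f_measurable_F: "i \<le> j \<Longrightarrow> f i \<in> borel_measurable (F j)"
  using martingale measurable_nat_filtration_mono[OF filtration]
  unfolding bmartingale_def by blast

lemma w_measurable_F: "i \<le> j \<Longrightarrow> w (Suc i) \<in> borel_measurable (F j)"
  using measurable_nat_filtration_mono[OF filtration _ predictable] .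

lemma integrable_f: "integrable M (f j)"
  using martingale unfolding bmartingale_def by blast

lemma f_measurable[measurable]: "f j \<in> borel_measurable M"
  using integrable_f by (rule borel_measurable_integrable)

lemma set_integral_increment_eq_0:
  assumes "A \<in> sets (F m)"
  shows "(LINT x:A|M. f (Suc m) x - f m x) = 0"
proof -
  have "A \<in> sets M" using assms sets_F_subset by blast
  then have "(LINT x:A|M. f (Suc m) x - f m x) = (LINT x:A|M. f (Suc m) x) - (LINT x:A|M. f m x)"
    by (intro set_integral_diff)
      (auto simp: set_integrable_def intro: integrable_mult_indicator integrable_f)
  also have "\<dots> = 0"
    using martingale assms unfolding bmartingale_def by simp
  finally show ?thesis .
qed

lemma AE_norm_diff_le: "AE x in M. \<forall>k. norm (f k x - f 0 x) \<le> real k * sqrt b"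
proof -
  have "AE x in M. \<forall>j. norm (f (Suc j) x - f j x) \<le> w (Suc j) x"
    using increment_le by (simp add: AE_all_countable)
  with square_sum_le show ?thesis
  proof eventually_elim
    case (elim x)
    have w_le: "w (Suc j) x \<le> sqrt b" for j
    proof -
      have "(w (Suc j) x)\<^sup>2 \<le> (\<Sum>i<Suc j. (w (Suc i) x)\<^sup>2)"
        by (rule member_le_sum) auto
      also have "\<dots> \<le> b" using elim(1) by blast
      finally show ?thesis by (simp add: real_le_rsqrt)
    qed
    show ?case
    proof
      fix k show "norm (f k x - f 0 x) \<le> real k * sqrt b"
      proof (induction k)
        case (Suc k)
        have "norm (f (Suc k) x - f 0 x) \<le> norm (f k x - f 0 x) + norm (f (Suc k) x - f k x)"
          using norm_triangle_ineq[of "f k x - f 0 x" "f (Suc k) x - f k x"] by simp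
        also have "\<dots> \<le> real k * sqrt b + sqrt b"
          using Suc.IH elim(2) w_le[of k] by (meson add_mono order_trans)
        finally show ?case by (simp add: algebra_simps)
      qed simp
    qed
  qed
qed

definition cosh_prod :: "real \<Rightarrow> nat \<Rightarrow> 'a \<Rightarrow> real" where
  "cosh_prod l k x = (\<Prod>j<k. cosh (l * w (Suc j) x))"

definition cosh_supermartingale :: "real \<Rightarrow> nat \<Rightarrow> 'a \<Rightarrow> real" where
  "cosh_supermartingale l k x = cosh (l * norm (f k x - f 0 x)) / cosh_prod l k x"

definition cosh_integrand :: "real \<Rightarrow> nat \<Rightarrow> 'a \<Rightarrow> 'h" where
  "cosh_integrand l m x =
    (sinh (l * norm (f m x - f 0 x)) * sinh (l * w (Suc m) x)
      / (norm (f m x - f 0 x) * w (Suc m) x * cosh_prod l (Suc m) x)) *\<^sub>R (f m x - f 0 x)"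

lemma cosh_prod_ge_1: "1 \<le> cosh_prod l k x"
  unfolding cosh_prod_def by (rule prod_ge_1) (simp add: cosh_real_ge_1)

lemma cosh_prod_Suc: "cosh_prod l (Suc k) x = cosh_prod l k x * cosh (l * w (Suc k) x)"
  by (simp add: cosh_prod_def)

lemma cosh_prod_measurable: "cosh_prod l k \<in> borel_measurable (F k)"
proof -
  have [measurable]: "w (Suc j) \<in> borel_measurable (F k)" if "j \<in> {..<k}" for j
    using w_measurable_F that by simp
  show ?thesis unfolding cosh_prod_def by measurable
qed

lemma cosh_prod_le_exp:
  assumes "(\<Sum>j<k. (w (Suc j) x)\<^sup>2) \<le> b"
  shows "cosh_prod l k x \<le> exp (l\<^sup>2 * b / 2)"
proof -
  have "cosh_prod l k x \<le> (\<Prod>j<k. exp ((l * w (Suc j) x)\<^sup>2 / 2))"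
    unfolding cosh_prod_def by (intro prod_mono) (auto intro: cosh_le_exp_square_half)
  also have "\<dots> = exp (l\<^sup>2 / 2 * (\<Sum>j<k. (w (Suc j) x)\<^sup>2))"
    by (simp add: exp_sum sum_distrib_left power_mult_distrib)
  also have "\<dots> \<le> exp (l\<^sup>2 * b / 2)"
    using assms by (simp add: mult_left_mono)
  finally show ?thesis .
qed

lemma cosh_supermartingale_measurable: "cosh_supermartingale l k \<in> borel_measurable (F k)"
proof -
  have [measurable]: "f k \<in> borel_measurable (F k)" "f 0 \<in> borel_measurable (F k)"
    "cosh_prod l k \<in> borel_measurable (F k)"
    using f_measurable_F cosh_prod_measurable by auto
  show ?thesis unfolding cosh_supermartingale_def by measurable
qed

lemma cosh_supermartingale_nonneg: "0 \<le> cosh_supermartingale l k x"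
  unfolding cosh_supermartingale_def using cosh_prod_ge_1[of l k x] by simp

lemma integrable_cosh_supermartingale: "integrable M (cosh_supermartingale l k)"
proof (rule integrable_const_bound)
  show "AE x in M. norm (cosh_supermartingale l k x) \<le> cosh (l * (real k * sqrt b))"
    using AE_norm_diff_le
  proof eventually_elim
    case (elim x)
    have "cosh_supermartingale l k x \<le> cosh (l * norm (f k x - f 0 x))"
      unfolding cosh_supermartingale_def using cosh_prod_ge_1[of l k x]
      by (simp add: divide_le_eq order_trans[OF _ mult_right_mono])
    also have "\<dots> \<le> cosh (l * (real k * sqrt b))"
      using elim by (intro cosh_mult_mono) auto
    finally show ?case using cosh_supermartingale_nonneg[of l k x] by simp
  qed
  show "cosh_supermartingale l k \<in> borel_measurable M"
    using measurable_from_subalg[OF subalgebra_F cosh_supermartingale_measurable] .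
qed

lemma cosh_integrand_measurable: "cosh_integrand l m \<in> borel_measurable (F m)"
proof -
  have [measurable]: "f m \<in> borel_measurable (F m)" "f 0 \<in> borel_measurable (F m)"
    "w (Suc m) \<in> borel_measurable (F m)" "cosh_prod l m \<in> borel_measurable (F m)"
    using f_measurable_F w_measurable_F cosh_prod_measurable by auto
  show ?thesis unfolding cosh_integrand_def cosh_prod_Suc by measurable
qed

lemma cosh_supermartingale_Suc_le:
  assumes "norm (f (Suc m) x - f m x) \<le> w (Suc m) x"
  shows "cosh_supermartingale l (Suc m) x
    \<le> cosh_supermartingale l m x + cosh_integrand l m x \<bullet> (f (Suc m) x - f m x)"
proof -
  define y d W where "y = f m x - f 0 x" and "d = f (Suc m) x - f m x" and "W = w (Suc m) x"
  define Q where "Q = cosh_prod l (Suc m) x"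
  have Q: "Q = cosh_prod l m x * cosh (l * W)" "0 < Q"
    unfolding Q_def W_def cosh_prod_Suc using cosh_prod_ge_1[of l m x] by auto
  have "cosh_supermartingale l (Suc m) x = cosh (l * norm (y + d)) / Q"
    unfolding cosh_supermartingale_def Q_def y_def d_def by simp
  also have "\<dots> \<le> (cosh (l * norm y) * cosh (l * W)
      + sinh (l * norm y) * sinh (l * W) / (norm y * W) * (y \<bullet> d)) / Q"
    using cosh_norm_add_le[where x=y and d=d and w=W and l=l] assms Q(2) unfolding d_def W_def
    by (simp add: divide_right_mono)
  also have "\<dots> = cosh (l * norm y) / cosh_prod l m x
      + sinh (l * norm y) * sinh (l * W) / (norm y * W * Q) * (y \<bullet> d)"
    using Q cosh_prod_ge_1[of l m x] by (simp add: field_simps)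
  also have "\<dots> = cosh_supermartingale l m x + cosh_integrand l m x \<bullet> d"
    unfolding cosh_supermartingale_def cosh_integrand_def Q_def y_def W_def
    by (simp only: inner_scaleR_left)
  finally show ?thesis unfolding d_def .
qed

lemma norm_cosh_integrand_le:
  assumes "0 \<le> l"
  shows "norm (cosh_integrand l m x) \<le> l * sinh (l * norm (f m x - f 0 x))"
proof (cases "f m x - f 0 x = 0 \<or> w (Suc m) x = 0")
  case True
  then show ?thesis using assms by (auto simp: cosh_integrand_def)
next
  case False
  define a W where "a = norm (f m x - f 0 x)" and "W = w (Suc m) x"
  have a: "0 < a" and W: "\<bar>W\<bar> > 0" using False by (auto simp: a_def W_def)
  have "norm (cosh_integrand l m x)
      = \<bar>sinh (l * a) * sinh (l * W) / (a * W * (cosh_prod l m x * cosh (l * W)))\<bar> * a"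
    unfolding cosh_integrand_def norm_scaleR cosh_prod_Suc a_def W_def ..
  also have "\<dots> = sinh (l * a) * (\<bar>sinh (l * W)\<bar> / (\<bar>W\<bar> * cosh (l * W))) / cosh_prod l m x"
    using a assms cosh_prod_ge_1[of l m x] by (simp add: abs_mult field_simps)
  also have "\<dots> \<le> sinh (l * a) * l / 1"
    using abs_sinh_le_mult_cosh[OF assms, of W] W a assms cosh_prod_ge_1[of l m x]
    by (intro frac_le mult_left_mono) (auto simp: divide_le_eq mult.commute)
  finally show ?thesis by (simp add: a_def mult.commute)
qed

lemma AE_norm_cosh_integrand_le:
  assumes "0 \<le> l"
  shows "AE x in M. norm (cosh_integrand l m x) \<le> l * sinh (l * (real m * sqrt b))"
  using AE_norm_diff_le
proof eventually_elim
  case (elim x)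
  have "norm (cosh_integrand l m x) \<le> l * sinh (l * norm (f m x - f 0 x))"
    by (rule norm_cosh_integrand_le[OF assms])
  also have "\<dots> \<le> l * sinh (l * (real m * sqrt b))"
    using elim assms by (intro mult_left_mono) (auto intro: mult_left_mono)
  finally show ?case .
qed

lemma set_integral_cosh_supermartingale_Suc_le:
  assumes l: "0 \<le> l" and A: "A \<in> sets (F m)"
  shows "(LINT x:A|M. cosh_supermartingale l (Suc m) x) \<le> (LINT x:A|M. cosh_supermartingale l m x)"
proof -
  define H where "H x = indicator A x *\<^sub>R cosh_integrand l m x" for x
  define d where "d x = f (Suc m) x - f m x" for x
  have H_F: "H \<in> borel_measurable (F m)"
    using cosh_integrand_measurable A unfolding H_def by measurable
  have H_le: "AE x in M. norm (H x) \<le> l * sinh (l * (real m * sqrt b))"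
    using AE_norm_cosh_integrand_le[OF l, of m]
    by eventually_elim (auto simp: H_def indicator_def intro: order_trans[OF norm_ge_zero])
  have d: "integrable M d" unfolding d_def using integrable_f by auto
  have H_d: "integrable M (\<lambda>x. H x \<bullet> d x)"
    using integrable_inner_bounded[OF measurable_from_subalg[OF subalgebra_F H_F] H_le d] .
  have H_d_0: "(\<integral>x. H x \<bullet> d x \<partial>M) = 0"
    using integral_inner_bounded_eq_0[OF subalgebra_F H_F H_le d] set_integral_increment_eq_0
    unfolding d_def by blast
  have A_M: "A \<in> sets M" using A sets_F_subset by blast
  have G: "integrable M (\<lambda>x. indicator A x * cosh_supermartingale l k x)" for k
    using integrable_mult_indicator[OF A_M integrable_cosh_supermartingale] by simp
  have "(LINT x:A|M. cosh_supermartingale l (Suc m) x)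
      \<le> (\<integral>x. indicator A x * cosh_supermartingale l m x + H x \<bullet> d x \<partial>M)"
    unfolding set_lebesgue_integral_def
  proof (intro integral_mono_AE Bochner_Integration.integrable_add G H_d)
    show "AE x in M. indicator A x *\<^sub>R cosh_supermartingale l (Suc m) x
        \<le> indicator A x * cosh_supermartingale l m x + H x \<bullet> d x"
      using increment_le[of m]
    proof eventually_elim
      case (elim x)
      then show ?case
        using cosh_supermartingale_Suc_le[OF elim, of l]
        by (cases "x \<in> A") (simp_all add: H_def d_def)
    qed
  qed (use G in simp)
  also have "\<dots> = (LINT x:A|M. cosh_supermartingale l m x)"
    using H_d_0 G H_d by (simp add: set_lebesgue_integral_def)
  finally show ?thesis .
qed

lemma cosh_supermartingale_ge:
  assumes "0 \<le> l" and "(\<Sum>j<k. (w (Suc j) x)\<^sup>2) \<le> b" and "s \<le> norm (f k x - f 0 x)"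
  shows "exp (l * s - l\<^sup>2 * b / 2) / 2 \<le> cosh_supermartingale l k x"
proof -
  have "exp (l * s) / 2 \<le> exp (l * norm (f k x - f 0 x)) / 2"
    using assms by (simp add: mult_left_mono)
  also have "\<dots> \<le> cosh (l * norm (f k x - f 0 x))"
    by (simp add: cosh_def)
  finally have "exp (l * s) / 2 / exp (l\<^sup>2 * b / 2) \<le> cosh_supermartingale l k x"
    unfolding cosh_supermartingale_def
    using cosh_prod_le_exp[OF assms(2)] cosh_prod_ge_1[of l k x] by (intro frac_le) auto
  then show ?thesis by (simp add: exp_diff)
qed

lemma measure_norm_diff_gt_le:
  assumes l: "0 < l"
  shows "measure M {x\<in>space M. \<exists>k. s < norm (f k x - f 0 x)} \<le> 2 * exp (l\<^sup>2 * b / 2 - l * s)"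
proof -
  define c where "c = exp (l * s - l\<^sup>2 * b / 2) / 2"
  have [measurable]: "cosh_supermartingale l k \<in> borel_measurable M" for k
    using measurable_from_subalg[OF subalgebra_F cosh_supermartingale_measurable] .
  have "AE x in M. x \<in> {x\<in>space M. \<exists>k. s < norm (f k x - f 0 x)}
      \<longrightarrow> x \<in> {x\<in>space M. \<exists>k. c \<le> cosh_supermartingale l k x}"
    using square_sum_le
  proof eventually_elim
    case (elim x)
    show ?case
      using cosh_supermartingale_ge[where l=l and x=x and s=s] elim l unfolding c_def
      by (auto dest: less_imp_le)
  qed
  then have "measure M {x\<in>space M. \<exists>k. s < norm (f k x - f 0 x)}
      \<le> measure M {x\<in>space M. \<exists>k. c \<le> cosh_supermartingale l k x}"
    by (intro finite_measure_mono_AE) auto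
  also have "\<dots> \<le> 1 / c"
  proof -
    have "c * measure M {x\<in>space M. \<exists>k. c \<le> cosh_supermartingale l k x}
        \<le> (\<integral>x. cosh_supermartingale l 0 x \<partial>M)"
    proof (rule supermartingale_maximal_ineq[OF _ filtration])
      show "finite_measure M" by unfold_locales
    qed (use l in \<open>auto intro: cosh_supermartingale_measurable integrable_cosh_supermartingale
        cosh_supermartingale_nonneg set_integral_cosh_supermartingale_Suc_le\<close>)
    also have "(\<integral>x. cosh_supermartingale l 0 x \<partial>M) = 1"
      by (simp add: cosh_supermartingale_def cosh_prod_def prob_space)
    finally show ?thesis
      by (simp add: c_def pos_le_divide_eq mult.commute)
  qed
  also have "1 / c = 2 * exp (l\<^sup>2 * b / 2 - l * s)"
    unfolding c_def by (simp add: exp_diff)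
  finally show ?thesis .
qed

lemma measure_SUP_norm_diff_ge_le:
  assumes r: "0 < r"
  shows "measure M {x\<in>space M. ereal r \<le> (SUP j. ereal (norm (f j x - f 0 x)))}
    \<le> 2 * exp (- (r\<^sup>2 / (2 * b)))"
proof (cases "0 < b")
  case False
  then have "1 \<le> exp (- (r\<^sup>2 / (2 * b)))"
    by (simp add: divide_nonneg_nonpos)
  then show ?thesis by (intro order_trans[OF prob_le_1]) linarith
next
  case b: True
  let ?S = "{x\<in>space M. ereal r \<le> (SUP j. ereal (norm (f j x - f 0 x)))}"
  \<comment> \<open>The supremum need not be attained, so \<open>r\<close> is approached by levels \<open>s < r\<close>.\<close>
  have bound: "measure M ?S \<le> 2 * exp (- (s\<^sup>2 / (2 * b)))" if s: "0 < s" "s < r" for s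
  proof -
    have "?S \<subseteq> {x\<in>space M. \<exists>k. s < norm (f k x - f 0 x)}"
    proof safe
      fix x assume "ereal r \<le> (SUP j. ereal (norm (f j x - f 0 x)))"
      then have "ereal s < (SUP j. ereal (norm (f j x - f 0 x)))"
        using s by (auto intro: order_less_le_trans[of "ereal s" "ereal r"])
      then show "\<exists>k. s < norm (f k x - f 0 x)" by (auto simp: less_SUP_iff)
    qed
    then have "measure M ?S \<le> measure M {x\<in>space M. \<exists>k. s < norm (f k x - f 0 x)}"
      by (intro finite_measure_mono) auto
    also have "\<dots> \<le> 2 * exp ((s / b)\<^sup>2 * b / 2 - s / b * s)"
      using s b by (intro measure_norm_diff_gt_le) auto
    also have "(s / b)\<^sup>2 * b / 2 - s / b * s = - (s\<^sup>2 / (2 * b))"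
      using b by (simp add: field_simps power2_eq_square)
    finally show ?thesis .
  qed
  have "\<forall>\<^sub>F s in at_left r. measure M ?S \<le> 2 * exp (- (s\<^sup>2 / (2 * b)))"
    using eventually_at_left_real[OF r] by eventually_elim (use bound in auto)
  moreover have "((\<lambda>s. 2 * exp (- (s\<^sup>2 / (2 * b)))) \<longlongrightarrow> 2 * exp (- (r\<^sup>2 / (2 * b)))) (at_left r)"
    using b by (intro tendsto_intros) auto
  ultimately show ?thesis
    using tendsto_le[OF trivial_limit_at_left_real _ tendsto_const] by blast
qed

end

lemma AE_partial_sums_le_if_esssup_suminf_le:
  fixes g :: "nat \<Rightarrow> 'a \<Rightarrow> real"
  assumes "esssup M (\<lambda>x. \<Sum>j. ereal (g j x)) \<le> ereal b" and "\<And>j x. 0 \<le> g j x"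
  shows "AE x in M. \<forall>n. (\<Sum>j<n. g j x) \<le> b"
  using esssup_AE[of "\<lambda>x. \<Sum>j. ereal (g j x)" M]
proof eventually_elim
  case (elim x)
  have "ereal (\<Sum>j<n. g j x) \<le> ereal b" for n
  proof -
    have "ereal (\<Sum>j<n. g j x) = (\<Sum>j<n. ereal (g j x))" by simp
    also have "\<dots> \<le> (\<Sum>j. ereal (g j x))" by (rule suminf_upper) (simp add: assms(2))
    also have "\<dots> \<le> ereal b" using elim assms(1) by (rule order_trans)
    finally show ?thesis .
  qed
  then show ?case by simp
qed

theorem theorem3p1:
  fixes M :: "'a measure" and F :: "nat \<Rightarrow> 'a measure"
    and f :: "nat \<Rightarrow> 'a \<Rightarrow> 'h::{real_inner, banach, second_countable_topology}"
    and w :: "nat \<Rightarrow> 'a \<Rightarrow> real" and b r :: real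
  assumes "prob_space M"
    and "nat_filtration M F"
    and "sets (F 0) = {{}, space M}"
    and "bmartingale M F f"
    and "\<And>j. j \<ge> 1 \<Longrightarrow> w j \<in> borel_measurable (F (j - 1))"
    and "\<And>j x. j \<ge> 1 \<Longrightarrow> x \<in> space M \<Longrightarrow> w j x \<ge> 0"
    and "\<And>j. j \<ge> 1 \<Longrightarrow> AE x in M. norm (f j x - f (j - 1) x) \<le> w j x"
    and "ereal b \<ge> esssup M (\<lambda>x. \<Sum>j. ereal ((w (Suc j) x)\<^sup>2))"
    and "r > 0"
  shows "measure M {x \<in> space M. (SUP j. ereal (norm (f j x - f 0 x))) \<ge> ereal r}
           \<le> 2 * exp (- (r\<^sup>2 / (2 * b)))"
proof -
  interpret bounded_increment_martingale M F f w b
  proof (intro bounded_increment_martingale.intro bounded_increment_martingale_axioms.intro)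
    show "prob_space M" "nat_filtration M F" "bmartingale M F f" by fact+
    show "w (Suc j) \<in> borel_measurable (F j)" for j
      using assms(5)[of "Suc j"] by simp
    show "AE x in M. norm (f (Suc j) x - f j x) \<le> w (Suc j) x" for j
      using assms(7)[of "Suc j"] by simp
    show "AE x in M. \<forall>n. (\<Sum>j<n. (w (Suc j) x)\<^sup>2) \<le> b"
      using assms(8) by (intro AE_partial_sums_le_if_esssup_suminf_le) auto
  qed
  show ?thesis using measure_SUP_norm_diff_ge_le[OF assms(9)] by simp
qed

end
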